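(* Let $m$ be a positive integer. If $\|m\alpha\|\ge\|q_{k-1}\alpha\|+(a_{k+1}+1)\|q_k\alpha\|$ for some $k\ge2$, then $\mathrm{ab}_\alpha(m)<q_k-1$.
   Context: $\alpha\in(0,1)$ irrational, $\alpha=[0;a_1,a_2,\ldots]$ with positive integers $a_i$, $a_1\ge2$; $q_{-1}=0$, $q_0=1$, $q_1=a_1$, $q_k=a_kq_{k-1}+q_{k-2}$ ($k\ge2$). $\|x\|$ is the distance from $x$ to the nearest integer. Sturmian words of slope $\alpha$: with $R(\rho)=\{\rho+\alpha\}$ on $[0,1)$ and either $I_0=[0,1-\alpha)$ or $I_0=(0,1-\alpha]$ ($I_1$ its complement), $\mathbf{s}_{\rho,\alpha}$ has $n$-th letter $0$ iff $R^n(\rho)\in I_0$; they share a set $\mathcal{L}_\alpha$ of finite factors. An abelian power of period $m$ and exponent $e$ is a concatenation of $e$ pairwise abelian equivalent words (same numbers of $0$s and $1$s) of length $m$; $\mathrm{ab}_\alpha(m)$ is the maximum exponent of an abelian power of period $m$ in $\mathcal{L}_\alpha$ (it is known that $\mathrm{ab}_\alpha(m)=\lfloor 1/\|m\alpha\|\rfloor$). *)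

theory Defs
  imports Complex_Main
begin

definition dist_int :: "real \<Rightarrow> real" where
  "dist_int x = \<bar>x - of_int (round x)\<bar>"

text \<open>Continued fraction expansion of a real in (0,1) via the Gauss map:
  cf_rem x 0 = x, cf_rem x (k+1) = frac (1 / cf_rem x k), and
  the partial quotient a_(k+1) = floor (1 / cf_rem x k); a_0 = 0.\<close>
fun cf_rem :: "real \<Rightarrow> nat \<Rightarrow> real" where
  "cf_rem x 0 = x"
| "cf_rem x (Suc k) = frac (1 / cf_rem x k)"

fun cf_a :: "real \<Rightarrow> nat \<Rightarrow> nat" where
  "cf_a x 0 = 0"
| "cf_a x (Suc k) = nat \<lfloor>1 / cf_rem x k\<rfloor>"

fun cf_q :: "real \<Rightarrow> nat \<Rightarrow> nat" where
  "cf_q x 0 = 1"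
| "cf_q x (Suc 0) = cf_a x 1"
| "cf_q x (Suc (Suc k)) = cf_a x (Suc (Suc k)) * cf_q x (Suc k) + cf_q x k"

text \<open>Sturmian words s_{rho,alpha} (letters 0/1), for the two choices of I_0:
  variant False: I_0 = [0, 1-alpha); variant True: I_0 = (0, 1-alpha].\<close>
definition sturmian :: "bool \<Rightarrow> real \<Rightarrow> real \<Rightarrow> nat \<Rightarrow> nat" where
  "sturmian v \<rho> \<alpha> n =
     (let y = frac (\<rho> + real n * \<alpha>) in
      if (if v then 0 < y \<and> y \<le> 1 - \<alpha> else y < 1 - \<alpha>) then 0 else 1)"

definition sturm_lang :: "real \<Rightarrow> nat list set" where
  "sturm_lang \<alpha> = {w. \<exists>v \<rho> i. 0 \<le> \<rho> \<and> \<rho> < 1 \<and>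
       w = map (sturmian v \<rho> \<alpha>) [i..<i + length w]}"

definition abelian_power :: "nat list \<Rightarrow> nat \<Rightarrow> nat \<Rightarrow> bool" where
  "abelian_power w m e \<longleftrightarrow> length w = m * e \<and>
     (\<forall>j<e. \<forall>l<e.
        count_list (take m (drop (j*m) w)) 0 = count_list (take m (drop (l*m) w)) 0 \<and>
        count_list (take m (drop (j*m) w)) 1 = count_list (take m (drop (l*m) w)) 1)"

definition ab :: "real \<Rightarrow> nat \<Rightarrow> nat" where
  "ab \<alpha> m = (GREATEST e. \<exists>w\<in>sturm_lang \<alpha>. abelian_power w m e)"

end

theory Submission
  imports Defs
begin

text \<open>A Sturmian word is mechanical: its factor of length m starting at i contains
  \<open>h(i + m) - h(i)\<close> letters 1, where h(n) is the floor (or ceiling) of \<open>\<rho> + n\<alpha>\<close>, and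
  this differs from \<open>m\<alpha>\<close> by less than 1. If the e blocks of an abelian power of period m
  all contain c letters 1, the whole power contains ec of them, so \<open>|e(c - m\<alpha>)| < 1\<close>
  and \<open>e ||m\<alpha>|| < 1\<close>. On the continued fraction side, write \<open>\<theta>\<^sub>n = ||q\<^sub>n\<^sub>-\<^sub>1\<alpha>||\<close>;
  the identities \<open>q\<^sub>k\<theta>\<^sub>k + q\<^sub>k\<^sub>-\<^sub>1\<theta>\<^sub>k\<^sub>+\<^sub>1 = 1\<close> and
  \<open>\<theta>\<^sub>k\<^sub>+\<^sub>2 = \<theta>\<^sub>k - a\<^sub>k\<^sub>+\<^sub>1\<theta>\<^sub>k\<^sub>+\<^sub>1\<close> together with the growth of the \<open>q\<^sub>k\<close> show
  \<open>(\<theta>\<^sub>k + (a\<^sub>k\<^sub>+\<^sub>1 + 1)\<theta>\<^sub>k\<^sub>+\<^sub>1)(q\<^sub>k - 1) > 1\<close>. So the hypothesis gives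
  \<open>||m\<alpha>||(q\<^sub>k - 1) > 1\<close>, and every exponent e is below \<open>q\<^sub>k - 1\<close>.\<close>

section \<open>Distance to the nearest integer\<close>

lemma dist_int_nonneg: "0 \<le> dist_int x"
  by (simp add: dist_int_def)

lemma dist_int_le_abs_diff: "dist_int x \<le> \<bar>x - of_int n\<bar>"
proof (cases "n = round x")
  case False
  then have "1 \<le> \<bar>n - round x\<bar>" by linarith
  then have "1 \<le> \<bar>real_of_int n - of_int (round x)\<bar>" by linarith
  then show ?thesis using of_int_round_abs_le[of x] unfolding dist_int_def by linarith
qed (simp add: dist_int_def)

lemma dist_int_eq_0_iff: "dist_int x = 0 \<longleftrightarrow> x \<in> \<int>"
proof
  show "dist_int x = 0 \<Longrightarrow> x \<in> \<int>"
    unfolding dist_int_def by (metis Ints_of_int abs_eq_0 eq_iff_diff_eq_0)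
  show "x \<in> \<int> \<Longrightarrow> dist_int x = 0"
    by (auto simp: dist_int_def elim: Ints_cases)
qed

lemma dist_int_mult_irrational_pos:
  assumes "\<alpha> \<notin> \<rat>" "m > 0"
  shows "0 < dist_int (real m * \<alpha>)"
proof -
  have "real m * \<alpha> \<notin> \<int>"
  proof
    assume "real m * \<alpha> \<in> \<int>"
    then have "real m * \<alpha> / real m \<in> \<rat>"
      using Ints_subset_Rats by (intro Rats_divide) auto
    then show False using assms by simp
  qed
  then show ?thesis using dist_int_nonneg[of "real m * \<alpha>"] dist_int_eq_0_iff by fastforce
qed

section \<open>Abelian powers in Sturmian words\<close>

lemma floor_add_unit_interval:
  assumes "0 < \<alpha>" "\<alpha> < 1"
  shows "\<lfloor>x + \<alpha>\<rfloor> - \<lfloor>x\<rfloor> = (if frac x < 1 - \<alpha> then 0 else 1)"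
  using assms by (simp add: floor_add frac_eq floor_eq_iff)

lemma ceiling_add_unit_interval:
  assumes "0 < \<alpha>" "\<alpha> < 1"
  shows "\<lceil>x + \<alpha>\<rceil> - \<lceil>x\<rceil> = (if 0 < frac x \<and> frac x \<le> 1 - \<alpha> then 0 else 1)"
proof -
  define y where "y = - (x + \<alpha>)"
  have "\<lceil>x + \<alpha>\<rceil> - \<lceil>x\<rceil> = \<lfloor>y + \<alpha>\<rfloor> - \<lfloor>y\<rfloor>"
    by (simp add: ceiling_def y_def)
  moreover have "frac y < 1 - \<alpha> \<longleftrightarrow> 0 < frac x \<and> frac x \<le> 1 - \<alpha>"
  proof -
    have "frac (x + \<alpha>) = (if frac x < 1 - \<alpha> then frac x + \<alpha> else frac x + \<alpha> - 1)"
      using assms by (simp add: frac_add frac_eq)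
    then show ?thesis
      using assms frac_ge_0[of x] frac_lt_1[of x] frac_neg[of "x + \<alpha>"] frac_eq_0_iff[of "x + \<alpha>"]
      unfolding y_def by (auto split: if_splits dest: frac_eq_0_iff[THEN iffD2])
  qed
  ultimately show ?thesis using floor_add_unit_interval[OF assms, of y] by auto
qed

definition sturmian_height :: "bool \<Rightarrow> real \<Rightarrow> real \<Rightarrow> nat \<Rightarrow> int" where
  "sturmian_height v \<rho> \<alpha> n = (if v then \<lceil>\<rho> + real n * \<alpha>\<rceil> else \<lfloor>\<rho> + real n * \<alpha>\<rfloor>)"

lemma sturmian_eq_height_diff:
  assumes "0 < \<alpha>" "\<alpha> < 1"
  shows "int (sturmian v \<rho> \<alpha> n) = sturmian_height v \<rho> \<alpha> (Suc n) - sturmian_height v \<rho> \<alpha> n"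
proof -
  define x where "x = \<rho> + real n * \<alpha>"
  have "\<rho> + real (Suc n) * \<alpha> = x + \<alpha>" by (simp add: x_def algebra_simps)
  then show ?thesis
    using floor_add_unit_interval[OF assms, of x] ceiling_add_unit_interval[OF assms, of x]
    unfolding sturmian_def sturmian_height_def Let_def x_def[symmetric] by auto
qed

lemma sturmian_height_diff_approx:
  "\<bar>real_of_int (sturmian_height v \<rho> \<alpha> n - sturmian_height v \<rho> \<alpha> n') - (real n - real n') * \<alpha>\<bar> < 1"
proof -
  define x x' where "x = \<rho> + real n * \<alpha>" and "x' = \<rho> + real n' * \<alpha>"
  have "(real n - real n') * \<alpha> = x - x'" by (simp add: x_def x'_def algebra_simps)
  moreover have "\<bar>real_of_int (sturmian_height v \<rho> \<alpha> n - sturmian_height v \<rho> \<alpha> n') - (x - x')\<bar> < 1"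
    unfolding sturmian_height_def x_def[symmetric] x'_def[symmetric]
    by (cases v; simp add: abs_less_iff;
        use floor_correct[of x] floor_correct[of x'] ceiling_correct[of x] ceiling_correct[of x'] in linarith)
  ultimately show ?thesis by simp
qed

lemma count_ones_sturmian_factor:
  assumes "0 < \<alpha>" "\<alpha> < 1"
  shows "int (count_list (map (sturmian v \<rho> \<alpha>) [i..<i + m]) 1)
           = sturmian_height v \<rho> \<alpha> (i + m) - sturmian_height v \<rho> \<alpha> i"
proof (induction m)
  case (Suc m)
  have "int (count_list [sturmian v \<rho> \<alpha> (i + m)] 1) = int (sturmian v \<rho> \<alpha> (i + m))"
    by (simp add: sturmian_def Let_def)
  then show ?case
    using Suc sturmian_eq_height_diff[OF assms, of v \<rho> "i + m"] by simp
qed simp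

lemma int_increments_telescope:
  fixes g :: "nat \<Rightarrow> int"
  assumes "\<And>j. j < e \<Longrightarrow> g (i + Suc j * m) - g (i + j * m) = c"
  shows "g (i + e * m) - g i = int e * c"
  using assms
proof (induction e)
  case (Suc e)
  then have "g (i + e * m) - g i = int e * c" by simp
  moreover have "g (i + Suc e * m) - g (i + e * m) = c" using Suc.prems by simp
  ultimately show ?case by (simp add: algebra_simps)
qed simp

lemma abelian_power_sturmian_exponent_bound:
  assumes "0 < \<alpha>" "\<alpha> < 1" and "w \<in> sturm_lang \<alpha>" and "abelian_power w m e"
  shows "real e * dist_int (real m * \<alpha>) < 1"
proof (cases "e = 0")
  case False
  obtain v \<rho> i where w: "w = map (sturmian v \<rho> \<alpha>) [i..<i + length w]"
    using assms(3) unfolding sturm_lang_def by blast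
  define h where "h = sturmian_height v \<rho> \<alpha>"
  define ones where "ones j = int (count_list (take m (drop (j * m) w)) 1)" for j
  have ones_eq: "ones j = h (i + Suc j * m) - h (i + j * m)" if "j < e" for j
  proof -
    have "Suc j * m \<le> e * m" using that by (intro mult_le_mono1) simp
    then have "Suc j * m \<le> length w"
      using assms(4) unfolding abelian_power_def by (simp add: mult.commute)
    then have "take m (drop (j * m) w) = map (sturmian v \<rho> \<alpha>) [i + j * m..<i + j * m + m]"
      by (subst w) (simp add: drop_map take_map)
    then show ?thesis
      unfolding ones_def h_def
      using count_ones_sturmian_factor[OF assms(1,2), of v \<rho> "i + j * m" m] by (simp add: algebra_simps)
  qed
  have "h (i + Suc j * m) - h (i + j * m) = ones 0" if "j < e" for j
  proof -
    have "count_list (take m (drop (j * m) w)) 1 = count_list (take m (drop (0 * m) w)) 1"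
      using assms(4) that False unfolding abelian_power_def by blast
    then show ?thesis using ones_eq[OF that] unfolding ones_def by simp
  qed
  then have "h (i + e * m) - h i = int e * ones 0"
    by (rule int_increments_telescope)
  then have "\<bar>real e * (of_int (ones 0) - real m * \<alpha>)\<bar> < 1"
    using sturmian_height_diff_approx[of v \<rho> \<alpha> "i + e * m" i] by (simp add: h_def algebra_simps)
  then have "real e * \<bar>real m * \<alpha> - of_int (ones 0)\<bar> < 1"
    by (simp add: abs_mult abs_minus_commute)
  moreover have "real e * dist_int (real m * \<alpha>) \<le> real e * \<bar>real m * \<alpha> - of_int (ones 0)\<bar>"
    by (intro mult_left_mono dist_int_le_abs_diff) simp
  ultimately show ?thesis by linarith
qed simp

lemma ab_mult_dist_int_lt_1:
  assumes "0 < \<alpha>" "\<alpha> < 1" "\<alpha> \<notin> \<rat>"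
  shows "real (ab \<alpha> m) * dist_int (real m * \<alpha>) < 1"
proof (cases "m = 0")
  case False
  define d where "d = dist_int (real m * \<alpha>)"
  define P where "P e \<longleftrightarrow> (\<exists>w\<in>sturm_lang \<alpha>. abelian_power w m e)" for e
  have d_pos: "0 < d" using dist_int_mult_irrational_pos assms(3) False unfolding d_def by blast
  have bound: "real e * d < 1" if "P e" for e
    using that abelian_power_sturmian_exponent_bound[OF assms(1,2)] unfolding P_def d_def by blast
  have "P 0"
  proof -
    have "[] \<in> sturm_lang \<alpha>" unfolding sturm_lang_def by (intro CollectI exI[of _ False] exI[of _ 0]) simp
    then show ?thesis unfolding P_def abelian_power_def by auto
  qed
  moreover have "e \<le> nat \<lceil>1 / d\<rceil>" if "P e" for e
  proof -
    have "real e < 1 / d" using bound[OF that] d_pos by (simp add: field_simps)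
    then show ?thesis by linarith
  qed
  ultimately have "P (Greatest P)" by (rule GreatestI_nat)
  then show ?thesis using bound unfolding ab_def P_def d_def by blast
qed (simp add: dist_int_def)

section \<open>Continued fractions\<close>

lemma cf_rem_irrational: "\<alpha> \<notin> \<rat> \<Longrightarrow> cf_rem \<alpha> n \<notin> \<rat>"
  by (induction n) (simp_all flip: inverse_eq_divide)

text \<open>\<open>cf_den \<alpha> n\<close> and \<open>cf_num \<alpha> n\<close> are \<open>q\<^sub>n\<^sub>-\<^sub>1\<close> and \<open>p\<^sub>n\<^sub>-\<^sub>1\<close>, with the
  usual start \<open>q\<^sub>-\<^sub>1 = 0\<close>, \<open>p\<^sub>-\<^sub>1 = 1\<close>, \<open>p\<^sub>0 = 0\<close>; the product \<open>cf_theta \<alpha> n\<close> of the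
  first n remainders turns out to be \<open>||q\<^sub>n\<^sub>-\<^sub>1\<alpha>||\<close>.\<close>

definition cf_theta :: "real \<Rightarrow> nat \<Rightarrow> real" where
  "cf_theta \<alpha> n = (\<Prod>i<n. cf_rem \<alpha> i)"

fun cf_den :: "real \<Rightarrow> nat \<Rightarrow> nat" where
  "cf_den \<alpha> 0 = 0"
| "cf_den \<alpha> (Suc n) = cf_q \<alpha> n"

fun cf_num :: "real \<Rightarrow> nat \<Rightarrow> int" where
  "cf_num \<alpha> 0 = 1"
| "cf_num \<alpha> (Suc 0) = 0"
| "cf_num \<alpha> (Suc (Suc n)) = int (cf_a \<alpha> (Suc n)) * cf_num \<alpha> (Suc n) + cf_num \<alpha> n"

lemma cf_den_Suc_Suc: "cf_den \<alpha> (Suc (Suc n)) = cf_a \<alpha> (Suc n) * cf_den \<alpha> (Suc n) + cf_den \<alpha> n"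
  by (cases n) auto

lemma cf_theta_Suc: "cf_theta \<alpha> (Suc n) = cf_theta \<alpha> n * cf_rem \<alpha> n"
  by (simp add: cf_theta_def)

declare cf_den.simps(2) [simp del] cf_a.simps(2) [simp del]

context
  fixes \<alpha> :: real
  assumes \<alpha>: "0 < \<alpha>" "\<alpha> < 1" "\<alpha> \<notin> \<rat>"
begin

lemma cf_rem_pos: "0 < cf_rem \<alpha> n"
proof -
  have "cf_rem \<alpha> n \<noteq> 0" using cf_rem_irrational[OF \<alpha>(3), of n] by auto
  moreover have "0 \<le> cf_rem \<alpha> n" using \<alpha> by (cases n) simp_all
  ultimately show ?thesis by simp
qed

lemma cf_rem_lt_1: "cf_rem \<alpha> n < 1"
  using \<alpha> by (cases n) (simp_all add: frac_lt_1)

lemma cf_a_Suc_eq: "real (cf_a \<alpha> (Suc n)) = of_int \<lfloor>1 / cf_rem \<alpha> n\<rfloor>"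
  using cf_rem_pos[of n] by (simp add: cf_a.simps)

lemma cf_a_Suc_ge_1: "1 \<le> cf_a \<alpha> (Suc n)"
proof -
  have "1 < 1 / cf_rem \<alpha> n" using cf_rem_pos[of n] cf_rem_lt_1[of n] by simp
  then show ?thesis by (simp add: cf_a.simps) linarith
qed

lemma cf_rem_Suc_eq: "cf_rem \<alpha> (Suc n) = 1 / cf_rem \<alpha> n - real (cf_a \<alpha> (Suc n))"
  by (simp only: cf_a_Suc_eq) (simp add: frac_def)

lemma cf_theta_pos: "0 < cf_theta \<alpha> n"
  unfolding cf_theta_def using cf_rem_pos by (intro prod_pos) auto

lemma cf_theta_Suc_lt: "cf_theta \<alpha> (Suc n) < cf_theta \<alpha> n"
  using cf_theta_pos[of n] cf_rem_lt_1[of n] by (simp add: cf_theta_Suc)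

lemma cf_theta_Suc_le: "cf_theta \<alpha> (Suc n) \<le> \<alpha>"
proof (induction n)
  case (Suc n)
  then show ?case using cf_theta_Suc_lt[of "Suc n"] by linarith
qed (simp add: cf_theta_def)

lemma cf_theta_Suc_Suc:
  "cf_theta \<alpha> (Suc (Suc n)) = cf_theta \<alpha> n - real (cf_a \<alpha> (Suc n)) * cf_theta \<alpha> (Suc n)"
proof -
  have "cf_theta \<alpha> (Suc (Suc n))
      = cf_theta \<alpha> n * cf_rem \<alpha> n * (1 / cf_rem \<alpha> n - real (cf_a \<alpha> (Suc n)))"
    by (simp only: cf_theta_Suc cf_rem_Suc_eq)
  also have "\<dots> = cf_theta \<alpha> n - real (cf_a \<alpha> (Suc n)) * (cf_theta \<alpha> n * cf_rem \<alpha> n)"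
    using cf_rem_pos[of n] by (simp add: field_simps del: cf_a.simps)
  finally show ?thesis by (simp only: cf_theta_Suc)
qed

lemma cf_den_theta_det:
  "real (cf_den \<alpha> (Suc n)) * cf_theta \<alpha> n + real (cf_den \<alpha> n) * cf_theta \<alpha> (Suc n) = 1"
proof (induction n)
  case (Suc n)
  then show ?case by (simp add: cf_den_Suc_Suc cf_theta_Suc_Suc algebra_simps)
qed (simp add: cf_den.simps(2) cf_theta_def)

lemma cf_den_mult_sub_num:
  "real (cf_den \<alpha> n) * \<alpha> - of_int (cf_num \<alpha> n) = (-1) ^ Suc n * cf_theta \<alpha> n"
proof (induction n rule: induct_nat_012)
  case (ge2 n)
  have "real (cf_den \<alpha> (Suc (Suc n))) * \<alpha> - of_int (cf_num \<alpha> (Suc (Suc n)))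
      = real (cf_a \<alpha> (Suc n)) * (real (cf_den \<alpha> (Suc n)) * \<alpha> - of_int (cf_num \<alpha> (Suc n)))
        + (real (cf_den \<alpha> n) * \<alpha> - of_int (cf_num \<alpha> n))"
    by (simp add: cf_den_Suc_Suc algebra_simps)
  also have "\<dots> = (-1) ^ Suc n * (cf_theta \<alpha> n - real (cf_a \<alpha> (Suc n)) * cf_theta \<alpha> (Suc n))"
    using ge2 by (simp add: algebra_simps)
  finally show ?case by (simp add: cf_theta_Suc_Suc)
qed (simp_all add: cf_den.simps(2) cf_theta_def)

lemma cf_q_Suc_Suc_ge: "cf_q \<alpha> (Suc j) + cf_q \<alpha> j \<le> cf_q \<alpha> (Suc (Suc j))"
  using cf_a_Suc_ge_1[of "Suc j"] by simp

lemma cf_q_pos: "0 < cf_q \<alpha> j"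
proof (induction j rule: induct_nat_012)
  case (ge2 j)
  then show ?case by simp
qed (use cf_a_Suc_ge_1[of 0] in simp_all)

context
  assumes a1: "2 \<le> cf_a \<alpha> 1"
begin

lemma lt_half_if_cf_a_1_ge_2: "\<alpha> < 1 / 2"
proof -
  have "2 \<le> 1 / \<alpha>" using a1 cf_a_Suc_eq[of 0] by simp linarith
  then have "\<alpha> \<le> 1 / 2" using \<alpha> by (simp add: field_simps)
  moreover have "(1 / 2 :: real) \<in> \<rat>" by simp
  ultimately show ?thesis using \<alpha>(3) by (metis order_le_less)
qed

lemma dist_int_cf_q: "dist_int (real (cf_q \<alpha> j) * \<alpha>) = cf_theta \<alpha> (Suc j)"
proof -
  have "\<bar>real (cf_q \<alpha> j) * \<alpha> - of_int (cf_num \<alpha> (Suc j))\<bar> = cf_theta \<alpha> (Suc j)"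
    using cf_den_mult_sub_num[of "Suc j"] cf_theta_pos[of "Suc j"] by (simp add: cf_den.simps(2) abs_mult)
  moreover have "cf_theta \<alpha> (Suc j) < 1 / 2" using cf_theta_Suc_le[of j] lt_half_if_cf_a_1_ge_2 by linarith
  ultimately have "round (real (cf_q \<alpha> j) * \<alpha>) = cf_num \<alpha> (Suc j)"
    by (intro round_unique') simp
  with \<open>\<bar>_\<bar> = _\<close> show ?thesis by (simp add: dist_int_def)
qed

lemma cf_q_ge_2: "1 \<le> j \<Longrightarrow> 2 \<le> cf_q \<alpha> j"
proof (induction j rule: induct_nat_012)
  case (ge2 j)
  then show ?case using cf_q_Suc_Suc_ge[of j] by (cases j) auto
qed (use a1 in simp_all)

lemma one_lt_cf_dist_combination_mult:
  assumes "2 \<le> k"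
  shows "1 < (dist_int (real (cf_q \<alpha> (k - 1)) * \<alpha>)
              + (real (cf_a \<alpha> (k + 1)) + 1) * dist_int (real (cf_q \<alpha> k) * \<alpha>))
             * (real (cf_q \<alpha> k) - 1)"
proof -
  obtain j where k: "k = Suc (Suc j)" using assms by (metis add_2_eq_Suc le_Suc_ex)
  define q q' a where "q = real (cf_q \<alpha> k)" and "q' = real (cf_q \<alpha> (k - 1))"
    and "a = real (cf_a \<alpha> (Suc k))"
  define \<theta> \<theta>' \<theta>'' where "\<theta> = cf_theta \<alpha> k" and "\<theta>' = cf_theta \<alpha> (Suc k)"
    and "\<theta>'' = cf_theta \<alpha> (Suc (Suc k))"
  have det: "q * \<theta> + q' * \<theta>' = 1"
    using cf_den_theta_det[of k] unfolding q_def q'_def \<theta>_def \<theta>'_def k by (simp add: cf_den.simps(2))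
  have rec: "\<theta>'' = \<theta> - a * \<theta>'"
    using cf_theta_Suc_Suc[of k] unfolding \<theta>_def \<theta>'_def \<theta>''_def a_def .
  have "0 < \<theta>'" "\<theta>'' < \<theta>'"
    using cf_theta_pos cf_theta_Suc_lt unfolding \<theta>'_def \<theta>''_def by auto
  have "2 \<le> q'" using cf_q_ge_2[of "k - 1"] unfolding q'_def k by simp
  have "cf_q \<alpha> (k - 1) + 1 \<le> cf_q \<alpha> k"
    using cf_q_Suc_Suc_ge[of j] cf_q_pos[of j] unfolding k by (simp del: cf_q.simps)
  then have "q' + 1 \<le> q" unfolding q_def q'_def by linarith
  have "1 \<le> a" using cf_a_Suc_ge_1[of k] unfolding a_def by simp
  have "q' \<le> (a + 1) * (q - 2)"
  proof -
    have "2 * (q - 2) \<le> (a + 1) * (q - 2)"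
      using \<open>1 \<le> a\<close> \<open>q' + 1 \<le> q\<close> \<open>2 \<le> q'\<close> by (intro mult_right_mono) auto
    moreover have "2 * (q - 2) = 2 * q - 4" by simp
    ultimately show ?thesis using \<open>q' + 1 \<le> q\<close> \<open>2 \<le> q'\<close> by linarith
  qed
  then have "0 \<le> \<theta>' * ((a + 1) * (q - 2) - q')" using \<open>0 < \<theta>'\<close> by simp
  moreover have "(\<theta> + (a + 1) * \<theta>') * (q - 1) = 1 + \<theta>' * ((a + 1) * (q - 2) - q') + (\<theta>' - \<theta>'')"
    using det rec by algebra
  ultimately have "1 < (\<theta> + (a + 1) * \<theta>') * (q - 1)" using \<open>\<theta>'' < \<theta>'\<close> by linarith
  moreover have "Suc (k - 1) = k" using assms by simp
  ultimately show ?thesis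
    using dist_int_cf_q[of "k - 1"] dist_int_cf_q[of k]
    unfolding q_def a_def \<theta>_def \<theta>'_def by simp
qed

end

end

theorem lemma3p2:
  fixes \<alpha> :: real and m k :: nat
  assumes "0 < \<alpha>" "\<alpha> < 1" "\<alpha> \<notin> \<rat>"
    and "cf_a \<alpha> 1 \<ge> 2"
    and "m > 0" and "k \<ge> 2"
    and "dist_int (real m * \<alpha>) \<ge>
           dist_int (real (cf_q \<alpha> (k - 1)) * \<alpha>)
           + (real (cf_a \<alpha> (k + 1)) + 1) * dist_int (real (cf_q \<alpha> k) * \<alpha>)"
  shows "int (ab \<alpha> m) < int (cf_q \<alpha> k) - 1"
proof -
  define d where "d = dist_int (real m * \<alpha>)"
  have "0 \<le> real (cf_q \<alpha> k) - 1"
    using cf_q_ge_2[OF assms(1-4), of k] assms(6) by simp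
  then have "(dist_int (real (cf_q \<alpha> (k - 1)) * \<alpha>)
              + (real (cf_a \<alpha> (k + 1)) + 1) * dist_int (real (cf_q \<alpha> k) * \<alpha>))
             * (real (cf_q \<alpha> k) - 1) \<le> d * (real (cf_q \<alpha> k) - 1)"
    using assms(7) unfolding d_def by (rule mult_right_mono[rotated])
  then have "1 < d * (real (cf_q \<alpha> k) - 1)"
    using one_lt_cf_dist_combination_mult[OF assms(1-4,6)] by linarith
  moreover have "real (ab \<alpha> m) * d < 1"
    using ab_mult_dist_int_lt_1[OF assms(1-3)] unfolding d_def .
  ultimately have "real (ab \<alpha> m) * d < (real (cf_q \<alpha> k) - 1) * d" by (simp add: mult.commute)
  then have "real (ab \<alpha> m) < real (cf_q \<alpha> k) - 1"
    using dist_int_nonneg unfolding d_def by (rule mult_right_less_imp_less)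
  then show ?thesis by linarith
qed

end
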